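(* Let $R$ be a hyperring. The following are equivalent: (i) $Spec(R)$ with the Zariski topology is a $T_1$-space; (ii) $\dim(R)=0$, i.e. there are no prime hyperideals $P\subsetneq Q$ of $R$ (equivalently every prime hyperideal is maximal); (iii) $Spec(R)$ is a Hausdorff space.
   Context: Standing conventions. A hyperring means a commutative Krasner hyperring with identity: a set $R$ with a hyperoperation $+:R\times R\to\mathcal P^*(R)$ (nonempty subsets; for subsets $A,B$ one sets $A+B=\bigcup_{a\in A,b\in B}a+b$) and a binary operation $\cdot$ such that: $+$ is associative and commutative; there is $0\in R$ with $0+x=\{x\}$ for all $x$; every $x$ has a unique $-x$ with $0\in x+(-x)$; $z\in x+y$ implies $y\in -x+z$ and $x\in z-y$; $(R,\cdot)$ is a commutative monoid with identity $1$; $0\cdot x=0$; and $x(y+z)=xy+xz$. A hyperideal of $R$ is a nonempty $I\subseteq R$ with $a-b\subseteq I$ and $ra\in I$ for all $a,b\in I$, $r\in R$. A proper hyperideal $P$ is prime if $ab\in P$ implies $a\in P$ or $b\in P$; maximal hyperideals are defined as usual. $Spec(R)$ is the set of prime hyperideals of $R$; for $S\subseteq R$, $V(S)=\{P\in Spec(R): S\subseteq P\}$. The Zariski topology on $Spec(R)$ is the topology whose closed sets are the sets $V(I)$, $I$ a hyperideal of $R$. *)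

theory Defs
  imports "HOL-Analysis.Analysis"
begin

text \<open>A commutative Krasner hyperring with identity, whose underlying set is the
whole type 'a: hyperaddition add, multiplication mul, zero z, identity u.\<close>

definition hsum :: "('a \<Rightarrow> 'a \<Rightarrow> 'a set) \<Rightarrow> 'a set \<Rightarrow> 'a set \<Rightarrow> 'a set" where
  "hsum add A B = (\<Union>a\<in>A. \<Union>b\<in>B. add a b)"

definition hneg :: "('a \<Rightarrow> 'a \<Rightarrow> 'a set) \<Rightarrow> 'a \<Rightarrow> 'a \<Rightarrow> 'a" where
  "hneg add z x = (THE y. z \<in> add x y)"

definition hyperring :: "('a \<Rightarrow> 'a \<Rightarrow> 'a set) \<Rightarrow> ('a \<Rightarrow> 'a \<Rightarrow> 'a) \<Rightarrow> 'a \<Rightarrow> 'a \<Rightarrow> bool" where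
  "hyperring add mul z u \<longleftrightarrow>
     (\<forall>x y. add x y \<noteq> {}) \<and>
     (\<forall>x y w. hsum add (add x y) {w} = hsum add {x} (add y w)) \<and>
     (\<forall>x y. add x y = add y x) \<and>
     (\<forall>x. add z x = {x}) \<and>
     (\<forall>x. \<exists>!y. z \<in> add x y) \<and>
     (\<forall>x y w. w \<in> add x y \<longrightarrow> y \<in> add (hneg add z x) w \<and> x \<in> add w (hneg add z y)) \<and>
     (\<forall>x y w. mul (mul x y) w = mul x (mul y w)) \<and>
     (\<forall>x y. mul x y = mul y x) \<and>
     (\<forall>x. mul u x = x) \<and>
     (\<forall>x. mul z x = z) \<and>
     (\<forall>x y w. mul x ` add y w = add (mul x y) (mul x w))"

definition hyperideal :: "('a \<Rightarrow> 'a \<Rightarrow> 'a set) \<Rightarrow> ('a \<Rightarrow> 'a \<Rightarrow> 'a) \<Rightarrow> 'a \<Rightarrow> 'a set \<Rightarrow> bool" where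
  "hyperideal add mul z I \<longleftrightarrow> I \<noteq> {} \<and>
     (\<forall>a\<in>I. \<forall>b\<in>I. add a (hneg add z b) \<subseteq> I) \<and>
     (\<forall>r. \<forall>a\<in>I. mul r a \<in> I)"

definition prime_hyperideal :: "('a \<Rightarrow> 'a \<Rightarrow> 'a set) \<Rightarrow> ('a \<Rightarrow> 'a \<Rightarrow> 'a) \<Rightarrow> 'a \<Rightarrow> 'a set \<Rightarrow> bool" where
  "prime_hyperideal add mul z P \<longleftrightarrow> hyperideal add mul z P \<and> P \<noteq> UNIV \<and>
     (\<forall>a b. mul a b \<in> P \<longrightarrow> a \<in> P \<or> b \<in> P)"

definition hSpec :: "('a \<Rightarrow> 'a \<Rightarrow> 'a set) \<Rightarrow> ('a \<Rightarrow> 'a \<Rightarrow> 'a) \<Rightarrow> 'a \<Rightarrow> 'a set set" where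
  "hSpec add mul z = {P. prime_hyperideal add mul z P}"

definition hV :: "('a \<Rightarrow> 'a \<Rightarrow> 'a set) \<Rightarrow> ('a \<Rightarrow> 'a \<Rightarrow> 'a) \<Rightarrow> 'a \<Rightarrow> 'a set \<Rightarrow> 'a set set" where
  "hV add mul z S = {P \<in> hSpec add mul z. S \<subseteq> P}"

definition zariski :: "('a \<Rightarrow> 'a \<Rightarrow> 'a set) \<Rightarrow> ('a \<Rightarrow> 'a \<Rightarrow> 'a) \<Rightarrow> 'a \<Rightarrow> 'a set topology" where
  "zariski add mul z = topology (\<lambda>U. \<exists>I. hyperideal add mul z I \<and> U = hSpec add mul z - hV add mul z I)"

definition hdim_zero :: "('a \<Rightarrow> 'a \<Rightarrow> 'a set) \<Rightarrow> ('a \<Rightarrow> 'a \<Rightarrow> 'a) \<Rightarrow> 'a \<Rightarrow> bool" where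
  "hdim_zero add mul z \<longleftrightarrow>
     \<not> (\<exists>P Q. P \<in> hSpec add mul z \<and> Q \<in> hSpec add mul z \<and> P \<subset> Q)"

end

theory Submission
  imports Defs
begin

text \<open>Specialisation in the Zariski topology is inclusion of primes: if \<open>P \<subseteq> Q\<close>, every open set
containing \<open>Q\<close> contains \<open>P\<close>. Hence separating points forces incomparable primes, i.e.
dimension zero. Conversely, in dimension zero every prime \<open>P\<close> is minimal, so each \<open>a \<in> P\<close>
satisfies \<open>s a\<^sup>n = 0\<close> for some \<open>s \<notin> P\<close> (otherwise Zorn's lemma gives a prime avoiding the
multiplicative set \<open>{s a\<^sup>n | s \<notin> P}\<close>, strictly inside \<open>P\<close>). For \<open>a \<in> P - Q\<close> the basic
open sets \<open>D(s) \<ni> P\<close> and \<open>D(a) \<ni> Q\<close> are then disjoint, so the space is Hausdorff.\<close>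

locale krasner_hyperring =
  fixes add :: "'a \<Rightarrow> 'a \<Rightarrow> 'a set" and mul :: "'a \<Rightarrow> 'a \<Rightarrow> 'a" and z u :: 'a
  assumes hyperring: "hyperring add mul z u"
begin

lemma neg_unique: "\<exists>!y. z \<in> add x y"
  using hyperring unfolding hyperring_def by (elim conjE) (rule spec)

lemma add_zero_left: "add z x = {x}"
  using hyperring unfolding hyperring_def by (elim conjE) (rule spec)

lemma mul_assoc: "mul (mul x y) w = mul x (mul y w)"
  using hyperring unfolding hyperring_def by blast

lemma mul_commute: "mul x y = mul y x"
  using hyperring unfolding hyperring_def by blast

lemma mul_left_commute: "mul x (mul y w) = mul y (mul x w)"
  by (metis mul_assoc mul_commute)

lemma mul_one_left: "mul u x = x"
  using hyperring unfolding hyperring_def by blast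

lemma mul_zero_left: "mul z x = z"
  using hyperring unfolding hyperring_def by blast

lemma distrib_left: "mul x ` add y w = add (mul x y) (mul x w)"
  using hyperring unfolding hyperring_def by blast

lemma zero_in_add_hneg: "z \<in> add x (hneg add z x)"
  unfolding hneg_def using neg_unique[of x] by (metis theI')

lemma hneg_eqI: "z \<in> add x y \<Longrightarrow> hneg add z x = y"
  unfolding hneg_def using neg_unique[of x] by (metis the1_equality)

lemma mul_hneg: "mul b (hneg add z y) = hneg add z (mul b y)"
proof -
  have "mul b z \<in> mul b ` add y (hneg add z y)"
    using zero_in_add_hneg by blast
  then have "z \<in> add (mul b y) (mul b (hneg add z y))"
    using distrib_left mul_zero_left mul_commute by metis
  then show ?thesis
    using hneg_eqI by metis
qed

lemma zero_in_hyperideal: "hyperideal add mul z I \<Longrightarrow> z \<in> I"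
  unfolding hyperideal_def using zero_in_add_hneg by blast

lemma hyperideal_mul_mem: "hyperideal add mul z I \<Longrightarrow> a \<in> I \<Longrightarrow> mul r a \<in> I"
  unfolding hyperideal_def by blast

lemma hyperideal_add_hneg_subset:
  "hyperideal add mul z I \<Longrightarrow> a \<in> I \<Longrightarrow> b \<in> I \<Longrightarrow> add a (hneg add z b) \<subseteq> I"
  unfolding hyperideal_def by blast

lemma hyperideal_UNIV: "hyperideal add mul z UNIV"
  unfolding hyperideal_def by auto

lemma hyperideal_zero: "hyperideal add mul z {z}"
proof -
  have "hneg add z z = z"
    by (rule hneg_eqI) (simp add: add_zero_left)
  then show ?thesis
    unfolding hyperideal_def by (simp add: add_zero_left mul_commute[of _ z] mul_zero_left)
qed

lemma hyperideal_Int: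
  "hyperideal add mul z I \<Longrightarrow> hyperideal add mul z J \<Longrightarrow> hyperideal add mul z (I \<inter> J)"
  using zero_in_hyperideal unfolding hyperideal_def by blast

lemma hyperideal_chain_Union:
  assumes "C \<noteq> {}" and ideals: "\<forall>I\<in>C. hyperideal add mul z I"
    and chain: "\<forall>I\<in>C. \<forall>J\<in>C. I \<subseteq> J \<or> J \<subseteq> I"
  shows "hyperideal add mul z (\<Union>C)"
  unfolding hyperideal_def
proof (intro conjI ballI allI)
  obtain I where "I \<in> C"
    using assms(1) by blast
  then have "z \<in> \<Union>C"
    using ideals zero_in_hyperideal by blast
  then show "\<Union>C \<noteq> {}" by blast
next
  fix a b assume "a \<in> \<Union>C" "b \<in> \<Union>C"
  then obtain I J where IJ: "I \<in> C" "J \<in> C" "a \<in> I" "b \<in> J" by blast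
  obtain K where K: "K \<in> C" "a \<in> K" "b \<in> K"
    using chain IJ by (metis subsetD)
  then have "add a (hneg add z b) \<subseteq> K"
    using ideals hyperideal_add_hneg_subset by blast
  then show "add a (hneg add z b) \<subseteq> \<Union>C"
    using K(1) by blast
next
  fix r a assume "a \<in> \<Union>C"
  then obtain I where "I \<in> C" "a \<in> I" by blast
  then show "mul r a \<in> \<Union>C"
    using ideals hyperideal_mul_mem by blast
qed

lemma hyperideal_colon:
  assumes J: "hyperideal add mul z J"
  shows "hyperideal add mul z {x. mul x b \<in> J}"
proof -
  have "z \<in> {x. mul x b \<in> J}"
    using zero_in_hyperideal[OF J] mul_zero_left by simp
  moreover have "add x (hneg add z y) \<subseteq> {x. mul x b \<in> J}"
    if "mul x b \<in> J" "mul y b \<in> J" for x y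
  proof
    fix w assume "w \<in> add x (hneg add z y)"
    then have "mul b w \<in> add (mul b x) (mul b (hneg add z y))"
      using distrib_left by blast
    then have "mul b w \<in> add (mul b x) (hneg add z (mul b y))"
      by (simp add: mul_hneg)
    then have "mul b w \<in> J"
      using J that mul_commute unfolding hyperideal_def by (metis subsetD)
    then show "w \<in> {x. mul x b \<in> J}"
      using mul_commute by simp
  qed
  moreover have "mul r x \<in> {x. mul x b \<in> J}" if "mul x b \<in> J" for r x
    using that J mul_assoc unfolding hyperideal_def by simp
  ultimately show ?thesis
    unfolding hyperideal_def by blast
qed

lemma hyperideal_if_hSpec: "P \<in> hSpec add mul z \<Longrightarrow> hyperideal add mul z P"
  unfolding hSpec_def prime_hyperideal_def by blast

lemma hSpec_mul_memD: "P \<in> hSpec add mul z \<Longrightarrow> mul a b \<in> P \<Longrightarrow> a \<in> P \<or> b \<in> P"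
  unfolding hSpec_def prime_hyperideal_def by blast

lemma one_notin_hSpec:
  assumes "P \<in> hSpec add mul z"
  shows "u \<notin> P"
proof
  assume "u \<in> P"
  then have "mul r u \<in> P" for r
    using hyperideal_if_hSpec[OF assms] unfolding hyperideal_def by blast
  then have "P = UNIV"
    using mul_one_left mul_commute by (metis UNIV_eq_I)
  then show False
    using assms unfolding hSpec_def prime_hyperideal_def by blast
qed

text \<open>Krull's argument: a hyperideal maximal among those avoiding \<open>S\<close> is prime.\<close>

lemma hSpec_avoiding_mult_closed:
  assumes mult_closed: "\<forall>x\<in>S. \<forall>y\<in>S. mul x y \<in> S" and "S \<noteq> {}" and "z \<notin> S"
  shows "\<exists>J\<in>hSpec add mul z. J \<inter> S = {}"
proof -
  define F where "F = {J. hyperideal add mul z J \<and> J \<inter> S = {}}"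
  have "\<exists>U\<in>F. \<forall>X\<in>C. X \<subseteq> U" if C: "C \<in> chains F" for C
  proof (cases "C = {}")
    case True
    have "{z} \<in> F"
      using hyperideal_zero \<open>z \<notin> S\<close> unfolding F_def by simp
    with True show ?thesis by blast
  next
    case False
    from C have "C \<subseteq> F" and "\<forall>I\<in>C. \<forall>J\<in>C. I \<subseteq> J \<or> J \<subseteq> I"
      unfolding chains_def chain_subset_def by auto
    with False have "\<Union>C \<in> F"
      using hyperideal_chain_Union[of C] unfolding F_def by auto
    then show ?thesis by blast
  qed
  then obtain M where "M \<in> F" and M_max: "\<forall>X\<in>F. M \<subseteq> X \<longrightarrow> X = M"
    using Zorn_Lemma2[of F] by blast
  then have M: "hyperideal add mul z M" "M \<inter> S = {}"
    unfolding F_def by auto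
  have colon: "\<exists>s\<in>S. mul s b \<in> M" if "c \<notin> M" "mul c b \<in> M" for b c
  proof (rule ccontr)
    assume "\<not> (\<exists>s\<in>S. mul s b \<in> M)"
    then have "{x. mul x b \<in> M} \<in> F"
      using hyperideal_colon[OF M(1)] unfolding F_def by auto
    moreover have "M \<subseteq> {x. mul x b \<in> M}"
      using hyperideal_mul_mem[OF M(1)] mul_commute by auto
    ultimately have "{x. mul x b \<in> M} = M"
      using M_max by blast
    then show False
      using that by blast
  qed
  have "prime_hyperideal add mul z M"
    unfolding prime_hyperideal_def
  proof (intro conjI allI impI)
    show "M \<noteq> UNIV"
      using M(2) \<open>S \<noteq> {}\<close> by blast
  next
    fix a b assume ab: "mul a b \<in> M"
    show "a \<in> M \<or> b \<in> M"
    proof (rule ccontr)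
      assume "\<not> (a \<in> M \<or> b \<in> M)"
      then have "a \<notin> M" "b \<notin> M" by auto
      obtain s1 where s1: "s1 \<in> S" "mul s1 b \<in> M"
        using colon[OF \<open>a \<notin> M\<close> ab] by blast
      then have "mul b s1 \<in> M"
        by (simp add: mul_commute)
      then obtain s2 where "s2 \<in> S" "mul s2 s1 \<in> M"
        using colon[OF \<open>b \<notin> M\<close>] by blast
      then show False
        using mult_closed s1(1) M(2) by blast
    qed
  qed (rule M(1))
  then show ?thesis
    using M(2) unfolding hSpec_def by blast
qed

definition hpow :: "'a \<Rightarrow> nat \<Rightarrow> 'a" where
  "hpow a n = (mul a ^^ n) u"

lemma hpow_add: "mul (hpow a n) (hpow a m) = hpow a (n + m)"
  by (induction n) (auto simp: hpow_def mul_one_left mul_assoc)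

lemma hSpec_hpow_memD: "P \<in> hSpec add mul z \<Longrightarrow> hpow a n \<in> P \<Longrightarrow> a \<in> P"
  by (induction n) (auto simp: hpow_def dest: one_notin_hSpec hSpec_mul_memD)

lemma minimal_hSpec_mem_annihilated_by_power:
  assumes P: "P \<in> hSpec add mul z" and minimal: "\<forall>J\<in>hSpec add mul z. J \<subseteq> P \<longrightarrow> J = P"
    and "a \<in> P"
  shows "\<exists>s n. s \<notin> P \<and> mul s (hpow a n) = z"
proof (rule ccontr)
  assume no_annihilator: "\<not> ?thesis"
  define S where "S = {mul s (hpow a n) | s n. s \<notin> P}"
  have "\<forall>x\<in>S. \<forall>y\<in>S. mul x y \<in> S"
  proof (intro ballI)
    fix x y assume "x \<in> S" "y \<in> S"
    then obtain s n t m where st: "x = mul s (hpow a n)" "s \<notin> P" "y = mul t (hpow a m)" "t \<notin> P"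
      unfolding S_def by blast
    have "mul x y = mul (mul s t) (hpow a (n + m))"
      unfolding st(1,3) hpow_add[symmetric] by (simp add: mul_assoc mul_left_commute)
    then show "mul x y \<in> S"
      unfolding S_def using st hSpec_mul_memD[OF P] by blast
  qed
  moreover have compl_sub_S: "x \<in> S" if "x \<notin> P" for x
    using that unfolding S_def by (intro CollectI exI[of _ x] exI[of _ 0])
      (simp add: hpow_def mul_commute[of x u] mul_one_left)
  moreover have "z \<notin> S"
    using no_annihilator unfolding S_def by blast
  ultimately obtain J where J: "J \<in> hSpec add mul z" "J \<inter> S = {}"
    using hSpec_avoiding_mult_closed one_notin_hSpec[OF P] by blast
  have "a \<in> S"
    unfolding S_def using one_notin_hSpec[OF P]
    by (intro CollectI exI[of _ u] exI[of _ 1]) (simp add: hpow_def mul_commute[of a u] mul_one_left)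
  then have "J \<subseteq> P" "J \<noteq> P"
    using J compl_sub_S \<open>a \<in> P\<close> by blast+
  then show False
    using minimal J(1) by blast
qed

definition ideal_hull :: "'a set \<Rightarrow> 'a set" where
  "ideal_hull S = \<Inter>{J. hyperideal add mul z J \<and> S \<subseteq> J}"

lemma hyperideal_ideal_hull: "hyperideal add mul z (ideal_hull S)"
  unfolding hyperideal_def
proof (intro conjI ballI allI)
  show "ideal_hull S \<noteq> {}"
    using zero_in_hyperideal unfolding ideal_hull_def by blast
  show "add a (hneg add z b) \<subseteq> ideal_hull S" if "a \<in> ideal_hull S" "b \<in> ideal_hull S" for a b
    using that hyperideal_add_hneg_subset unfolding ideal_hull_def by blast
  show "mul r a \<in> ideal_hull S" if "a \<in> ideal_hull S" for r a
    using that hyperideal_mul_mem unfolding ideal_hull_def by blast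
qed

lemma hV_ideal_hull: "hV add mul z (ideal_hull S) = hV add mul z S"
proof -
  have "S \<subseteq> ideal_hull S"
    unfolding ideal_hull_def by blast
  moreover have "ideal_hull S \<subseteq> P" if "P \<in> hSpec add mul z" "S \<subseteq> P" for P
    using that hyperideal_if_hSpec unfolding ideal_hull_def by (simp add: Inter_lower)
  ultimately show ?thesis
    unfolding hV_def by blast
qed

lemma hV_Int:
  assumes I: "hyperideal add mul z I" and J: "hyperideal add mul z J"
  shows "hV add mul z (I \<inter> J) = hV add mul z I \<union> hV add mul z J"
proof -
  have "I \<subseteq> P \<or> J \<subseteq> P" if "P \<in> hSpec add mul z" "I \<inter> J \<subseteq> P" for P
  proof (rule ccontr)
    assume "\<not> (I \<subseteq> P \<or> J \<subseteq> P)"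
    then obtain a b where ab: "a \<in> I" "a \<notin> P" "b \<in> J" "b \<notin> P" by blast
    then have "mul a b \<in> I \<inter> J"
      using hyperideal_mul_mem[OF I ab(1), of b] hyperideal_mul_mem[OF J ab(3), of a]
      by (simp add: mul_commute[of b a])
    then have "mul a b \<in> P"
      using that(2) by blast
    then show False
      using hSpec_mul_memD[OF that(1)] ab by blast
  qed
  then show ?thesis
    unfolding hV_def by auto
qed

definition zariski_open :: "'a set set \<Rightarrow> bool" where
  "zariski_open U \<longleftrightarrow> (\<exists>I. hyperideal add mul z I \<and> U = hSpec add mul z - hV add mul z I)"

lemma istopology_zariski_open: "istopology zariski_open"
  unfolding istopology_def
proof (intro conjI allI impI)
  fix U V assume "zariski_open U" "zariski_open V"
  then obtain I J where "hyperideal add mul z I" "U = hSpec add mul z - hV add mul z I"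
    "hyperideal add mul z J" "V = hSpec add mul z - hV add mul z J"
    unfolding zariski_open_def by blast
  then show "zariski_open (U \<inter> V)"
    unfolding zariski_open_def by (intro exI[of _ "I \<inter> J"]) (auto simp: hyperideal_Int hV_Int)
next
  fix K assume K: "\<forall>U\<in>K. zariski_open U"
  define S where "S = \<Union>{I. hyperideal add mul z I \<and> hSpec add mul z - hV add mul z I \<in> K}"
  have "\<Union>K = hSpec add mul z - hV add mul z S"
  proof
    show "\<Union>K \<subseteq> hSpec add mul z - hV add mul z S"
    proof
      fix P assume "P \<in> \<Union>K"
      then obtain U where "U \<in> K" "P \<in> U" by blast
      moreover obtain I where "hyperideal add mul z I" "U = hSpec add mul z - hV add mul z I"
        using K \<open>U \<in> K\<close> unfolding zariski_open_def by blast
      ultimately show "P \<in> hSpec add mul z - hV add mul z S"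
        unfolding S_def hV_def by blast
    qed
    show "hSpec add mul z - hV add mul z S \<subseteq> \<Union>K"
      unfolding S_def hV_def by blast
  qed
  then show "zariski_open (\<Union>K)"
    unfolding zariski_open_def
    by (intro exI[of _ "ideal_hull S"]) (simp add: hyperideal_ideal_hull hV_ideal_hull)
qed

lemma openin_zariski: "openin (zariski add mul z) U \<longleftrightarrow> zariski_open U"
  unfolding zariski_def zariski_open_def[abs_def, symmetric]
  using topology_inverse'[OF istopology_zariski_open] by simp

lemma topspace_zariski: "topspace (zariski add mul z) = hSpec add mul z"
proof -
  have "hV add mul z UNIV = {}"
    unfolding hV_def hSpec_def prime_hyperideal_def by blast
  then have "zariski_open (hSpec add mul z)"
    unfolding zariski_open_def using hyperideal_UNIV by (intro exI[of _ UNIV]) simp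
  moreover have "zariski_open U \<Longrightarrow> U \<subseteq> hSpec add mul z" for U
    unfolding zariski_open_def by blast
  ultimately show ?thesis
    unfolding topspace_def openin_zariski by blast
qed

lemma openin_zariski_basic: "openin (zariski add mul z) {P \<in> hSpec add mul z. x \<notin> P}"
proof -
  have "{P \<in> hSpec add mul z. x \<notin> P} = hSpec add mul z - hV add mul z (ideal_hull {x})"
    using hV_ideal_hull[of "{x}"] unfolding hV_def by auto
  then show ?thesis
    unfolding openin_zariski zariski_open_def using hyperideal_ideal_hull by blast
qed

lemma openin_zariski_specialization:
  assumes "openin (zariski add mul z) U" "Q \<in> U" "P \<in> hSpec add mul z" "P \<subseteq> Q"
  shows "P \<in> U"
  using assms unfolding openin_zariski zariski_open_def hV_def by blast

lemma t1_space_zariski_imp_hdim_zero: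
  assumes "t1_space (zariski add mul z)"
  shows "hdim_zero add mul z"
  unfolding hdim_zero_def
proof
  assume "\<exists>P Q. P \<in> hSpec add mul z \<and> Q \<in> hSpec add mul z \<and> P \<subset> Q"
  then obtain P Q where PQ: "P \<in> hSpec add mul z" "Q \<in> hSpec add mul z" "P \<subset> Q" by blast
  then obtain U where "openin (zariski add mul z) U" "Q \<in> U" "P \<notin> U"
    using assms unfolding t1_space_def topspace_zariski by blast
  then show False
    using openin_zariski_specialization PQ by blast
qed

lemma hdim_zero_imp_Hausdorff_space_zariski:
  assumes dim: "hdim_zero add mul z"
  shows "Hausdorff_space (zariski add mul z)"
  unfolding Hausdorff_space_def topspace_zariski
proof (intro allI impI)
  fix P Q assume PQ: "P \<in> hSpec add mul z \<and> Q \<in> hSpec add mul z \<and> P \<noteq> Q"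
  then obtain a where a: "a \<in> P" "a \<notin> Q"
    using dim unfolding hdim_zero_def by blast
  have "\<forall>J\<in>hSpec add mul z. J \<subseteq> P \<longrightarrow> J = P"
    using dim PQ unfolding hdim_zero_def by blast
  then obtain s n where sn: "s \<notin> P" "mul s (hpow a n) = z"
    using minimal_hSpec_mem_annihilated_by_power PQ a(1) by blast
  have "s \<in> R \<or> a \<in> R" if "R \<in> hSpec add mul z" for R
    using sn(2) zero_in_hyperideal[OF hyperideal_if_hSpec[OF that]]
      hSpec_mul_memD[OF that] hSpec_hpow_memD[OF that] by metis
  then have "disjnt {R \<in> hSpec add mul z. s \<notin> R} {R \<in> hSpec add mul z. a \<notin> R}"
    unfolding disjnt_def by blast
  then show "\<exists>U V. openin (zariski add mul z) U \<and> openin (zariski add mul z) V \<and>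
      P \<in> U \<and> Q \<in> V \<and> disjnt U V"
    using openin_zariski_basic PQ sn(1) a(2) by blast
qed

end

theorem mainTheorem9:
  fixes add :: "'a \<Rightarrow> 'a \<Rightarrow> 'a set" and mul :: "'a \<Rightarrow> 'a \<Rightarrow> 'a" and z u :: 'a
  assumes "hyperring add mul z u"
  shows "(t1_space (zariski add mul z) \<longleftrightarrow> hdim_zero add mul z) \<and>
         (hdim_zero add mul z \<longleftrightarrow> Hausdorff_space (zariski add mul z))"
proof -
  interpret krasner_hyperring add mul z u
    using assms by unfold_locales
  show ?thesis
    using t1_space_zariski_imp_hdim_zero hdim_zero_imp_Hausdorff_space_zariski
      Hausdorff_imp_t1_space by blast
qed

end
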